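(* The ML estimate of $\alpha_{t}$ from the observation $z_k = z_{k,\Re} + \jmath z_{k,\Im}$ (with $z_{k,\Re}, z_{k,\Im} \in \mathbb{R}$) is \begin{equation} \hat{\alpha}_{t,k}^{\text{ML}} = \arg\max_{\alpha \geq \rho_k \beta_k \tau_p} \; f_1 \left( z_{k,\Re} | \alpha \right) f_2 \left( z_{k,\Im} | \alpha \right) \end{equation} for the conditional PDFs \begin{align} &f_1 \left( z_{k,\Re} | \alpha \right) = \frac{ e^{- \frac{(z_{k,\Re})^2}{\lambda_2} \left( 1 - \frac{\lambda_1}{\lambda_1 + \lambda_2} \right)} }{\Gamma(M) \lambda_1^M \sqrt{\pi \lambda_2 }} \sum_{n=0}^{2M-1} {2M-1 \choose n} \notag \\ & \times \frac{\left( \Gamma \left( \frac{n+1}{2} \right) + c_n(z_{k,\Re}) \gamma \left( \frac{n+1}{2} , \frac{(z_{k,\Re})^2}{\lambda_2} \frac{\lambda_1}{\lambda_1+\lambda_2} \right) \right) }{ \left( \frac{z_{k,\Re}}{\lambda_2} \right)^{n+1-2M} \left( \frac{1}{\lambda_1} + \frac{1}{\lambda_2} \right)^{2M-\frac{n+1}{2}} }, \\ &f_2 \left( z_{k,\Im} | \alpha \right) = \frac{1}{\sqrt{\pi \lambda_2 }} e^{- \frac{( z_{k,\Im} )^2 }{\lambda_2} }, \end{align} where $\gamma(\cdot,\cdot)$ is the lower incomplete gamma function, $c_n(z)=(-1)^n$ if $z\ge 0$ and $c_n(z)=-1$ if $z<0$, and \begin{align} \lambda_1 &= \frac{\rho_k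 q \beta_k^2 \tau_p^2}{\alpha + \sigma^2}, \qquad \lambda_2 = \sigma^2 + \Upsilon_k + q \beta_k \tau_p - \lambda_1. \end{align}
   Context: A BS with $M$ antennas; $\tau_p$ orthogonal uplink pilots $\boldsymbol{\psi}_t$ with $\|\boldsymbol{\psi}_t\|^2=\tau_p$; $\mathcal{S}_t$ is the set of UEs sending pilot $t$, UE $i$ using power $\rho_i>0$. Uncorrelated Rayleigh fading $\mathbf{h}_k\sim\mathcal{CN}(\mathbf{0},\beta_k\mathbf{I}_M)$, independent across UEs, with $\beta_k$ known to UE $k$. The BS obtains $\mathbf{y}_t=\sum_{i\in\mathcal{S}_t}\sqrt{\rho_i\tau_p}\,\mathbf{h}_i+(\text{inter-cell interference of per-antenna power }\omega_t)+\mathbf{n}_t$, $\mathbf{n}_t\sim\mathcal{CN}(\mathbf{0},\sigma^2\mathbf{I}_M)$, and $\alpha_t=\sum_{i\in\mathcal{S}_t}\rho_i\beta_i\tau_p+\omega_t$. It transmits $\mathbf{V}=\sqrt{q}\sum_t\frac{\mathbf{y}_t^*}{\|\mathbf{y}_t\|}\boldsymbol{\phi}_t^{\mathrm{T}}$ with orthogonal $\boldsymbol{\phi}_t$, $\|\boldsymbol{\phi}_t\|^2=\tau_p$. UE $k\in\mathcal{S}_t$ observes $z_k=\sqrt{q\tau_p}\,\mathbf{h}_k^{\mathrm{T}}\frac{\mathbf{y}_t^*}{\|\mathbf{y}_t\|}+\boldsymbol{\upsilon}_k^{\mathrm{T}}\frac{\boldsymbol{\phi}_t^*}{\|\boldsymbol{\phi}_t\|}+\eta_k$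 with $\boldsymbol{\upsilon}_k\sim\mathcal{CN}(\mathbf{0},\Upsilon_k\mathbf{I}_{\tau_p})$ independent inter-cell interference and $\eta_k\sim\mathcal{CN}(0,\sigma^2)$. Then $z_k=g_k+\nu_k$ with independent $g_k=\sqrt{\lambda_1/2}\,x$, $x\sim\chi_{2M}$, and $\nu_k\sim\mathcal{CN}(0,\lambda_2)$ (with $\alpha=\alpha_t$). UE $k$ knows $\alpha_t\ge\rho_k\beta_k\tau_p$. *)

theory Defs
  imports "HOL-Probability.Probability"
begin

definition lower_inc_gamma :: "real \<Rightarrow> real \<Rightarrow> real" where
  "lower_inc_gamma s x = integral {0..x} (\<lambda>t. t powr (s - 1) * exp (- t))"

definition chi_density :: "nat \<Rightarrow> real \<Rightarrow> real" where
  "chi_density k x = (if x > 0 then x ^ (k - 1) * exp (- (x\<^sup>2) / 2)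
                       / (2 powr (real k / 2 - 1) * Gamma (real k / 2)) else 0)"

definition c_sign :: "nat \<Rightarrow> real \<Rightarrow> real" where
  "c_sign n z = (if z \<ge> 0 then (-1) ^ n else -1)"

definition lam1 :: "real \<Rightarrow> real \<Rightarrow> real \<Rightarrow> real \<Rightarrow> real \<Rightarrow> real \<Rightarrow> real" where
  "lam1 rho q beta tp sigma2 alpha = rho * q * beta\<^sup>2 * tp\<^sup>2 / (alpha + sigma2)"

definition lam2 :: "real \<Rightarrow> real \<Rightarrow> real \<Rightarrow> real \<Rightarrow> real \<Rightarrow> real \<Rightarrow> real \<Rightarrow> real" where
  "lam2 rho q beta tp sigma2 Ups alpha =
     sigma2 + Ups + q * beta * tp - lam1 rho q beta tp sigma2 alpha"

definition f1 :: "nat \<Rightarrow> real \<Rightarrow> real \<Rightarrow> real \<Rightarrow> real" where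
  "f1 M l1 l2 z =
     exp (- (z\<^sup>2 / l2) * (1 - l1 / (l1 + l2))) / (Gamma (real M) * l1 ^ M * sqrt (pi * l2))
     * (\<Sum>n = 0..2*M-1. real ((2*M-1) choose n) *
          ((Gamma ((real n + 1) / 2)
             + c_sign n z * lower_inc_gamma ((real n + 1) / 2) (z\<^sup>2 / l2 * (l1 / (l1 + l2))))
           / ((z / l2) powi (int n + 1 - 2 * int M)
              * (1 / l1 + 1 / l2) powr (2 * real M - (real n + 1) / 2))))"

definition f2 :: "real \<Rightarrow> real \<Rightarrow> real" where
  "f2 l2 z = exp (- (z\<^sup>2) / l2) / sqrt (pi * l2)"

end

theory Submission
  imports Defs
begin

text \<open>
  The observation is \<open>z = c X + d (W\<^sub>1 + \<i> W\<^sub>2)\<close> with \<open>c = \<surd>(\<lambda>\<^sub>1/2)\<close>, \<open>d = \<surd>\<lambda>\<^sub>2\<close>,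
  \<open>X\<close> chi-distributed and \<open>W\<^sub>1, W\<^sub>2\<close> Gaussian, all independent. Hence \<open>Im z\<close> is an
  independent Gaussian (density \<open>f\<^sub>2\<close>) and \<open>Re z\<close> has the convolution of a Gaussian with a
  scaled chi density. Completing the square in the exponent turns the convolution integral into
  a constant times \<open>\<integral>\<^sub>0\<^sup>\<infinity> y ^ (2M - 1) exp (- k (y - m)\<^sup>2) dy\<close>; expanding \<open>y = (y - m) + m\<close>
  binomially leaves the half-line moments \<open>\<integral>\<^sub>-\<^sub>b\<^sup>\<infinity> s ^ n exp (- s\<^sup>2) ds\<close>, which the substitution
  \<open>u = s\<^sup>2\<close> evaluates as \<open>(\<Gamma>((n+1)/2) + c\<^sub>n(b) \<gamma>((n+1)/2, b\<^sup>2)) / 2\<close>: these are the summands of \<open>f\<^sub>1\<close>.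
\<close>

lemma power2_powr_half_odd_mult:
  fixes x :: real and n :: nat
  assumes "x > 0"
  shows "(x\<^sup>2) powr ((real n + 1) / 2 - 1) * x = x ^ n"
proof -
  have "(x\<^sup>2) powr ((real n + 1) / 2 - 1) = (x powr 2) powr ((real n + 1) / 2 - 1)"
    using assms by (simp add: powr_numeral)
  also have "\<dots> = x powr (2 * ((real n + 1) / 2 - 1))"
    by (rule powr_powr)
  also have "2 * ((real n + 1) / 2 - 1) = real n - 1"
    by simp
  finally show ?thesis
    using assms by (simp add: powr_diff powr_realpow)
qed

lemma integral_power_gauss_atLeastAtMost:
  fixes b :: real and n :: nat
  assumes b: "b \<ge> 0"
  shows "(\<integral>s. indicator {0..b} s * (s ^ n * exp (- s\<^sup>2)) \<partial>lborel)
          = lower_inc_gamma ((real n + 1) / 2) (b\<^sup>2) / 2"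
proof -
  define f where "f u = u powr ((real n + 1) / 2 - 1) * exp (- u)" for u :: real
  define g where "g s = indicator {0..b} s * (s ^ n * exp (- s\<^sup>2))" for s :: real
  define I where "I = (\<integral>s. g s \<partial>lborel)"
  have "integrable lborel (\<lambda>s. s ^ n * exp (- s\<^sup>2) * indicator {0..b} s)"
    by (intro borel_integrable_atLeastAtMost) (auto intro!: continuous_intros)
  then have int: "integrable lborel g"
    unfolding g_def by (simp add: mult.commute)
  have g_nonneg: "g s \<ge> 0" for s
    by (simp add: g_def indicator_def)
  have pointwise: "f (s\<^sup>2) * (2 * s) * indicator {0..b} s = 2 * g s" if "s \<noteq> 0" for s
  proof (cases "s \<in> {0..b}")
    case True
    then have "s > 0" using that by simp
    have "f (s\<^sup>2) * (2 * s) = 2 * ((s\<^sup>2) powr ((real n + 1) / 2 - 1) * s) * exp (- s\<^sup>2)"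
      unfolding f_def by (simp only: ac_simps)
    also have "\<dots> = 2 * (s ^ n * exp (- s\<^sup>2))"
      unfolding power2_powr_half_odd_mult[OF \<open>s > 0\<close>] by simp
    finally show ?thesis
      using True by (simp add: g_def)
  qed (simp add: g_def)
  have "(\<integral>\<^sup>+u. f u * indicator {0\<^sup>2..b\<^sup>2} u \<partial>lborel)
      = (\<integral>\<^sup>+s. f (s\<^sup>2) * (2 * s) * indicator {0..b} s \<partial>lborel)"
    by (rule nn_integral_substitution[where g="\<lambda>x. x\<^sup>2" and g'="\<lambda>x. 2 * x"])
       (auto simp: f_def b set_borel_measurable_def intro!: derivative_eq_intros continuous_intros)
  also have "\<dots> = (\<integral>\<^sup>+s. ennreal (2 * g s) \<partial>lborel)"
    using AE_lborel_singleton[of 0]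
    by (intro nn_integral_cong_AE) (auto elim!: eventually_mono simp: pointwise)
  also have "\<dots> = ennreal (2 * I)"
    unfolding I_def using int g_nonneg
    by (subst nn_integral_eq_integral) auto
  finally have "(\<integral>\<^sup>+u. ennreal (f u * indicator {0..b\<^sup>2} u) \<partial>lborel) = ennreal (2 * I)"
    by simp
  moreover have "I \<ge> 0"
    unfolding I_def using g_nonneg by (rule integral_nonneg_AE[OF AE_I2])
  ultimately have "((\<lambda>u. f u * indicator {0..b\<^sup>2} u) has_integral 2 * I) UNIV"
    by (intro nn_integral_has_integral) (auto simp: f_def indicator_def)
  moreover have "(\<lambda>u. f u * indicator {0..b\<^sup>2} u) = (\<lambda>u. if u \<in> {0..b\<^sup>2} then f u else 0)"
    by (auto simp: indicator_def)
  ultimately have "(f has_integral 2 * I) {0..b\<^sup>2}"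
    by (metis has_integral_restrict_UNIV)
  then have "lower_inc_gamma ((real n + 1) / 2) (b\<^sup>2) = 2 * I"
    unfolding lower_inc_gamma_def f_def by (rule integral_unique)
  then show ?thesis unfolding I_def g_def by simp
qed

lemma integrable_power_gauss:
  fixes c :: real and n :: nat
  assumes c: "c > 0"
  shows "integrable lborel (\<lambda>s. s ^ n * exp (- c * s\<^sup>2))"
proof -
  define \<sigma> where "\<sigma> = sqrt (1 / (2 * c))"
  have \<sigma>: "\<sigma> > 0" "\<sigma>\<^sup>2 = 1 / (2 * c)"
    using c by (simp_all add: \<sigma>_def)
  have "integrable lborel (\<lambda>x. sqrt (2 * pi * \<sigma>\<^sup>2) * (normal_density 0 \<sigma> x * (x - 0) ^ n))"
    using \<sigma> by (intro integrable_mult_right integrable_normal_moment) auto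
  also have "(\<lambda>x. sqrt (2 * pi * \<sigma>\<^sup>2) * (normal_density 0 \<sigma> x * (x - 0) ^ n))
           = (\<lambda>x. x ^ n * exp (- c * x\<^sup>2))"
  proof
    fix x :: real
    have "- (x - 0)\<^sup>2 / (2 * \<sigma>\<^sup>2) = - c * x\<^sup>2"
      unfolding \<sigma>(2) using c by (simp add: field_simps)
    then show "sqrt (2 * pi * \<sigma>\<^sup>2) * (normal_density 0 \<sigma> x * (x - 0) ^ n) = x ^ n * exp (- c * x\<^sup>2)"
      using \<sigma> c unfolding normal_density_def by (simp add: field_simps)
  qed
  finally show ?thesis .
qed

lemma integrable_indicator_power_gauss:
  fixes A :: "real set" and n :: nat and c :: real
  assumes "A \<in> sets borel" "c > 0"
  shows "integrable lborel (\<lambda>s. indicator A s * (s ^ n * exp (- c * s\<^sup>2)))"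
proof -
  have "integrable lborel (\<lambda>s. indicator A s *\<^sub>R (s ^ n * exp (- c * s\<^sup>2)))"
    using assms by (intro integrable_mult_indicator integrable_power_gauss) auto
  then show ?thesis
    by simp
qed

lemma
  fixes a :: real
  assumes a: "a > 0"
  shows integrable_Gamma_integrand: "integrable lborel (\<lambda>t. indicator {0..} t * (t powr (a - 1) * exp (- t)))"
    and integral_Gamma_integrand: "(\<integral>t. indicator {0..} t * (t powr (a - 1) * exp (- t)) \<partial>lborel) = Gamma a"
proof -
  have eq: "(\<lambda>t. indicator {0..} t * (t powr (a - 1) * exp (- t))) = (\<lambda>t. indicator {0..} t * t powr (a - 1) / exp t)"
    by (auto simp: exp_minus field_simps)
  have nn: "(\<integral>\<^sup>+t. ennreal (indicator {0..} t * t powr (a - 1) / exp t) \<partial>lborel) = Gamma a"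
    by (rule Gamma_conv_nn_integral_real[OF a, symmetric])
  show int: "integrable lborel (\<lambda>t. indicator {0..} t * (t powr (a - 1) * exp (- t)))"
    unfolding eq using nn by (intro integrableI_nonneg) (auto simp: indicator_def)
  have "ennreal (\<integral>t. indicator {0..} t * (t powr (a - 1) * exp (- t)) \<partial>lborel)
      = (\<integral>\<^sup>+t. ennreal (indicator {0..} t * t powr (a - 1) / exp t) \<partial>lborel)"
    using int unfolding eq by (intro nn_integral_eq_integral[symmetric]) (auto simp: indicator_def)
  then show "(\<integral>t. indicator {0..} t * (t powr (a - 1) * exp (- t)) \<partial>lborel) = Gamma a"
    unfolding nn using Gamma_real_pos[OF a]
    by (subst (asm) ennreal_inj) (auto intro!: integral_nonneg_AE simp: indicator_def)
qed

lemma lower_inc_gamma_tendsto_Gamma: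
  fixes a :: real
  assumes a: "a > 0"
  shows "(lower_inc_gamma a \<longlongrightarrow> Gamma a) at_top"
proof -
  have lower_inc_gamma_eq: "lower_inc_gamma a
        = (\<lambda>x. \<integral>t. indicator {..x} t *\<^sub>R (indicator {0..} t * (t powr (a - 1) * exp (- t))) \<partial>lborel)"
  proof
    fix x
    have "(\<lambda>t. indicator {..x} t *\<^sub>R (indicator {0..} t * (t powr (a - 1) * exp (- t))))
        = (\<lambda>t. indicator {0..x} t *\<^sub>R (t powr (a - 1) * exp (- t)))"
      by (auto simp: indicator_def)
    then have "set_integrable lborel {0..x} (\<lambda>t. t powr (a - 1) * exp (- t))"
      using integrable_mult_indicator[of "{..x}" lborel, OF _ integrable_Gamma_integrand[OF a]]
      unfolding set_integrable_def by simp
    then have "lower_inc_gamma a x = (LINT t:{0..x}|lborel. t powr (a - 1) * exp (- t))"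
      unfolding lower_inc_gamma_def by (rule set_borel_integral_eq_integral(2)[symmetric])
    then show "lower_inc_gamma a x
        = (\<integral>t. indicator {..x} t *\<^sub>R (indicator {0..} t * (t powr (a - 1) * exp (- t))) \<partial>lborel)"
      unfolding set_lebesgue_integral_def
      by (auto intro!: Bochner_Integration.integral_cong simp: indicator_def)
  qed
  show ?thesis
    unfolding lower_inc_gamma_eq integral_Gamma_integrand[OF a, symmetric]
    by (rule tendsto_integral_at_top) (auto intro: integrable_Gamma_integrand[OF a])
qed

lemma integral_power_gauss_atLeast:
  fixes n :: nat
  shows "(\<integral>s. indicator {0..} s * (s ^ n * exp (- s\<^sup>2)) \<partial>lborel) = Gamma ((real n + 1) / 2) / 2"
proof -
  define a where "a = (real n + 1) / 2"
  define g where "g s = indicator {0..} s * (s ^ n * exp (- s\<^sup>2))" for s :: real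
  have "integrable lborel g"
    unfolding g_def using integrable_indicator_power_gauss[of "{0..}" 1 n] by simp
  then have "((\<lambda>b. \<integral>s. indicator {..b} s *\<^sub>R g s \<partial>lborel) \<longlongrightarrow> (\<integral>s. g s \<partial>lborel)) at_top"
    by (intro tendsto_integral_at_top) auto
  moreover have "\<forall>\<^sub>F b in at_top. (\<integral>s. indicator {..b} s *\<^sub>R g s \<partial>lborel) = lower_inc_gamma a (b\<^sup>2) / 2"
    using eventually_ge_at_top[of "0::real"]
  proof eventually_elim
    case (elim b)
    have "(\<integral>s. indicator {..b} s *\<^sub>R g s \<partial>lborel)
        = (\<integral>s. indicator {0..b} s * (s ^ n * exp (- s\<^sup>2)) \<partial>lborel)"
      unfolding g_def by (intro Bochner_Integration.integral_cong) (auto simp: indicator_def)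
    then show ?case
      unfolding a_def using integral_power_gauss_atLeastAtMost[OF elim] by simp
  qed
  ultimately have lim_integral: "((\<lambda>b. lower_inc_gamma a (b\<^sup>2) / 2) \<longlongrightarrow> (\<integral>s. g s \<partial>lborel)) at_top"
    by (rule Lim_transform_eventually)
  have "a > 0"
    by (simp add: a_def)
  have "filterlim (\<lambda>b::real. b\<^sup>2) at_top at_top"
    by real_asymp
  then have "((\<lambda>b. lower_inc_gamma a (b\<^sup>2)) \<longlongrightarrow> Gamma a) at_top"
    by (rule filterlim_compose[OF lower_inc_gamma_tendsto_Gamma[OF \<open>a > 0\<close>]])
  then have lim_Gamma: "((\<lambda>b. lower_inc_gamma a (b\<^sup>2) / 2) \<longlongrightarrow> Gamma a / 2) at_top"
    by (intro tendsto_divide tendsto_const) simp_all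
  show ?thesis
    using tendsto_unique[OF _ lim_integral lim_Gamma] unfolding g_def a_def by simp
qed

lemma integral_power_gauss_reflect:
  fixes b :: real and n :: nat
  shows "(\<integral>s. indicator {-b<..<0} s * (s ^ n * exp (- s\<^sup>2)) \<partial>lborel)
       = (-1) ^ n * (\<integral>s. indicator {0..b} s * (s ^ n * exp (- s\<^sup>2)) \<partial>lborel)"
proof -
  have "(\<integral>s. indicator {-b<..<0} s * (s ^ n * exp (- s\<^sup>2)) \<partial>lborel)
      = \<bar>-1\<bar> *\<^sub>R (\<integral>x. indicator {-b<..<0} (0 + -1 * x) * ((0 + -1 * x) ^ n * exp (- (0 + -1 * x)\<^sup>2)) \<partial>lborel)"
    by (rule lborel_integral_real_affine) simp
  also have "\<dots> = \<bar>-1\<bar> *\<^sub>R (\<integral>x. (-1) ^ n * (indicator {0..b} x * (x ^ n * exp (- x\<^sup>2))) \<partial>lborel)"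
  proof (intro arg_cong[where f="scaleR _"] integral_cong_AE)
    have pointwise: "indicator {-b<..<0} (0 + -1 * x) * ((0 + -1 * x) ^ n * exp (- (0 + -1 * x)\<^sup>2))
        = (-1) ^ n * (indicator {0..b} x * (x ^ n * exp (- x\<^sup>2)))" if "x \<noteq> 0" "x \<noteq> b" for x
      using that by (auto simp: indicator_def power_minus[of x n])
    show "AE x in lborel. indicator {-b<..<0} (0 + -1 * x) * ((0 + -1 * x) ^ n * exp (- (0 + -1 * x)\<^sup>2))
        = (-1) ^ n * (indicator {0..b} x * (x ^ n * exp (- x\<^sup>2)))"
      using AE_lborel_singleton[of 0] AE_lborel_singleton[of b] by eventually_elim (rule pointwise)
  qed auto
  finally show ?thesis
    by simp
qed

lemma integral_power_gauss_greaterThan: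
  fixes b :: real and n :: nat
  shows "(\<integral>s. indicator {-b<..} s * (s ^ n * exp (- s\<^sup>2)) \<partial>lborel)
       = (Gamma ((real n + 1) / 2) + c_sign n b * lower_inc_gamma ((real n + 1) / 2) (b\<^sup>2)) / 2"
proof (cases "b \<ge> 0")
  case True
  have "(\<integral>s. indicator {-b<..} s * (s ^ n * exp (- s\<^sup>2)) \<partial>lborel)
      = (\<integral>s. indicator {0..} s * (s ^ n * exp (- s\<^sup>2))
             + indicator {-b<..<0} s * (s ^ n * exp (- s\<^sup>2)) \<partial>lborel)"
    using AE_lborel_singleton[of 0] True
    by (intro integral_cong_AE) (auto elim!: eventually_mono simp: indicator_def)
  also have "\<dots> = (\<integral>s. indicator {0..} s * (s ^ n * exp (- s\<^sup>2)) \<partial>lborel)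
       + (\<integral>s. indicator {-b<..<0} s * (s ^ n * exp (- s\<^sup>2)) \<partial>lborel)"
    using integrable_indicator_power_gauss[of _ 1 n]
    by (intro Bochner_Integration.integral_add) auto
  finally show ?thesis
    using True
    by (simp add: integral_power_gauss_reflect integral_power_gauss_atLeast
        integral_power_gauss_atLeastAtMost c_sign_def add_divide_distrib)
next
  case False
  have "(\<integral>s. indicator {-b<..} s * (s ^ n * exp (- s\<^sup>2)) \<partial>lborel)
      = (\<integral>s. indicator {0..} s * (s ^ n * exp (- s\<^sup>2))
             - indicator {0..-b} s * (s ^ n * exp (- s\<^sup>2)) \<partial>lborel)"
    using False by (intro Bochner_Integration.integral_cong) (auto simp: indicator_def)
  also have "\<dots> = (\<integral>s. indicator {0..} s * (s ^ n * exp (- s\<^sup>2)) \<partial>lborel)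
       - (\<integral>s. indicator {0..-b} s * (s ^ n * exp (- s\<^sup>2)) \<partial>lborel)"
    using integrable_indicator_power_gauss[of _ 1 n]
    by (intro Bochner_Integration.integral_diff) auto
  finally show ?thesis
    using False
    by (simp add: integral_power_gauss_atLeast integral_power_gauss_atLeastAtMost c_sign_def
        diff_divide_distrib)
qed

lemma integral_power_gauss_scale:
  fixes k m :: real and n :: nat
  assumes k: "k > 0"
  shows "(\<integral>t. indicator {-m<..} t * (t ^ n * exp (- k * t\<^sup>2)) \<partial>lborel)
       = (1 / sqrt k) ^ (n + 1) * (\<integral>s. indicator {-(m * sqrt k)<..} s * (s ^ n * exp (- s\<^sup>2)) \<partial>lborel)"
proof -
  define c where "c = 1 / sqrt k"
  have c: "c > 0" "k * c\<^sup>2 = 1"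
    using k by (simp_all add: c_def power_divide)
  have pointwise: "indicator {-m<..} (0 + c * x) * ((0 + c * x) ^ n * exp (- k * (0 + c * x)\<^sup>2))
      = c ^ n * (indicator {-(m * sqrt k)<..} x * (x ^ n * exp (- x\<^sup>2)))" for x
  proof -
    have "-m < c * x \<longleftrightarrow> -(m * sqrt k) < x"
      using k by (simp add: c_def field_simps)
    moreover have "k * (c * x)\<^sup>2 = x\<^sup>2"
      using c by (simp add: power_mult_distrib)
    ultimately show ?thesis
      by (simp add: indicator_def power_mult_distrib ac_simps)
  qed
  have "(\<integral>t. indicator {-m<..} t * (t ^ n * exp (- k * t\<^sup>2)) \<partial>lborel)
      = \<bar>c\<bar> *\<^sub>R (\<integral>x. indicator {-m<..} (0 + c * x) * ((0 + c * x) ^ n * exp (- k * (0 + c * x)\<^sup>2)) \<partial>lborel)"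
    using c by (intro lborel_integral_real_affine) simp
  also have "\<dots> = c ^ (n + 1) * (\<integral>s. indicator {-(m * sqrt k)<..} s * (s ^ n * exp (- s\<^sup>2)) \<partial>lborel)"
    unfolding pointwise using c by (simp add: integral_mult_right_zero)
  finally show ?thesis
    unfolding c_def .
qed

lemma
  fixes k m :: real and N :: nat
  assumes k: "k > 0"
  shows integrable_power_shifted_gauss:
      "integrable lborel (\<lambda>y. indicator {0<..} y * (y ^ N * exp (- k * (y - m)\<^sup>2)))"
    and integral_power_shifted_gauss:
      "(\<integral>y. indicator {0<..} y * (y ^ N * exp (- k * (y - m)\<^sup>2)) \<partial>lborel)
       = (\<Sum>n\<le>N. real (N choose n) * m ^ (N - n)
                  * (\<integral>t. indicator {-m<..} t * (t ^ n * exp (- k * t\<^sup>2)) \<partial>lborel))"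
proof -
  define P where "P t = indicator {-m<..} t * ((t + m) ^ N * exp (- k * t\<^sup>2))" for t :: real
  have P_sum: "P = (\<lambda>t. \<Sum>n\<le>N. real (N choose n) * m ^ (N - n) * (indicator {-m<..} t * (t ^ n * exp (- k * t\<^sup>2))))"
    unfolding P_def binomial_ring by (simp add: fun_eq_iff sum_distrib_left sum_distrib_right ac_simps)
  have P_int: "integrable lborel P"
    unfolding P_sum using k
    by (intro Bochner_Integration.integrable_sum integrable_mult_right integrable_indicator_power_gauss) auto
  have shift: "(\<lambda>y. P (-m + 1 * y)) = (\<lambda>y. indicator {0<..} y * (y ^ N * exp (- k * (y - m)\<^sup>2)))"
    by (auto simp: P_def indicator_def fun_eq_iff)
  show "integrable lborel (\<lambda>y. indicator {0<..} y * (y ^ N * exp (- k * (y - m)\<^sup>2)))"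
    unfolding shift[symmetric] by (rule lborel_integrable_real_affine[OF P_int]) simp
  have "(\<integral>y. indicator {0<..} y * (y ^ N * exp (- k * (y - m)\<^sup>2)) \<partial>lborel) = (\<integral>t. P t \<partial>lborel)"
    using lborel_integral_real_affine[of 1 P "-m"] unfolding shift by simp
  also have "\<dots> = (\<Sum>n\<le>N. real (N choose n) * m ^ (N - n)
                  * (\<integral>t. indicator {-m<..} t * (t ^ n * exp (- k * t\<^sup>2)) \<partial>lborel))"
    unfolding P_sum using k
    by (subst Bochner_Integration.integral_sum)
       (auto intro!: integrable_mult_right integrable_indicator_power_gauss[simplified]
             simp: integral_mult_right_zero)
  finally show "(\<integral>y. indicator {0<..} y * (y ^ N * exp (- k * (y - m)\<^sup>2)) \<partial>lborel)
       = (\<Sum>n\<le>N. real (N choose n) * m ^ (N - n)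
                  * (\<integral>t. indicator {-m<..} t * (t ^ n * exp (- k * t\<^sup>2)) \<partial>lborel))" .
qed

lemma power_int_diff_of_nat:
  fixes w :: real and n N :: nat
  assumes "n \<le> N"
  shows "w powi (int n - int N) = inverse (w ^ (N - n))"
proof -
  have "int n - int N = - int (N - n)"
    using assms by simp
  then show ?thesis
    by (simp only: power_int_minus power_int_of_nat)
qed

lemma powr_nat_plus_half_odd:
  fixes k :: real and j n :: nat
  assumes "k > 0"
  shows "k powr (real j + (real n + 1) / 2) = k ^ j * sqrt k ^ (n + 1)"
proof -
  have "sqrt k ^ (n + 1) = (k powr (1 / 2)) ^ (n + 1)"
    using assms by (simp add: powr_half_sqrt)
  also have "\<dots> = (k powr (1 / 2)) powr real (n + 1)"
    using assms by (intro powr_realpow[symmetric]) simp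
  also have "\<dots> = k powr ((real n + 1) / 2)"
    by (simp add: powr_powr add.commute)
  finally have "k powr ((real n + 1) / 2) = sqrt k ^ (n + 1)" ..
  then show ?thesis
    using assms by (simp add: powr_add powr_realpow)
qed

lemma f1_summand_eq:
  fixes z l1 l2 X :: real and n M :: nat
  assumes n: "n \<le> 2 * M - 1" and M: "M \<ge> 1" and l1: "l1 > 0" and l2: "l2 > 0"
  defines "k \<equiv> 1 / l1 + 1 / l2"
  shows "(z / (l2 * k)) ^ (2 * M - 1 - n) * (1 / sqrt k) ^ (n + 1) * X
       = X / ((z / l2) powi (int n + 1 - 2 * int M) * k powr (2 * real M - (real n + 1) / 2))"
proof -
  have k: "k > 0"
    unfolding k_def using l1 l2 by (intro add_pos_pos) auto
  have exponent_int: "int n + 1 - 2 * int M = int n - int (2 * M - 1)"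
    using M by simp
  have exponent_real: "2 * real M - (real n + 1) / 2 = real (2 * M - 1 - n) + (real n + 1) / 2"
    using n M by (simp add: of_nat_diff field_simps)
  have "X / ((z / l2) powi (int n + 1 - 2 * int M) * k powr (2 * real M - (real n + 1) / 2))
      = X / (inverse ((z / l2) ^ (2 * M - 1 - n)) * (k ^ (2 * M - 1 - n) * sqrt k ^ (n + 1)))"
    unfolding exponent_int exponent_real power_int_diff_of_nat[OF n] powr_nat_plus_half_odd[OF k] ..
  also have "\<dots> = X * (z / l2) ^ (2 * M - 1 - n) / (k ^ (2 * M - 1 - n) * sqrt k ^ (n + 1))"
    by (simp add: divide_inverse inverse_mult_distrib)
  also have "\<dots> = (z / (l2 * k)) ^ (2 * M - 1 - n) * (1 / sqrt k) ^ (n + 1) * X"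
    using k by (simp add: power_divide field_simps)
  finally show ?thesis ..
qed

lemma exponent_complete_square:
  fixes z y l1 l2 :: real
  assumes l1: "l1 > 0" and l2: "l2 > 0"
  shows "- ((z - y)\<^sup>2 / l2) - y\<^sup>2 / l1
       = - (z\<^sup>2 / l2) * (1 - l1 / (l1 + l2)) - (1 / l1 + 1 / l2) * (y - z / (l2 * (1 / l1 + 1 / l2)))\<^sup>2"
proof -
  define S where "S = l1 + l2"
  have S: "S > 0"
    using l1 l2 by (simp add: S_def)
  have k: "1 / l1 + 1 / l2 = S / (l1 * l2)"
    using l1 l2 by (simp add: S_def field_simps)
  have m: "z / (l2 * (1 / l1 + 1 / l2)) = z * l1 / S"
    unfolding k using l1 l2 S by (simp add: field_simps)
  have "(- ((z - y)\<^sup>2 / l2) - y\<^sup>2 / l1) * (l1 * l2 * S) = - (z - y)\<^sup>2 * l1 * S - y\<^sup>2 * l2 * S"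
    using l1 l2 by (simp add: field_simps)
  also have "\<dots> = - z\<^sup>2 * l1 * (S - l1) - (y * S - z * l1)\<^sup>2"
    unfolding S_def by (simp add: power2_eq_square algebra_simps)
  also have "\<dots> = (- (z\<^sup>2 / l2) * (1 - l1 / S) - S / (l1 * l2) * (y - z * l1 / S)\<^sup>2) * (l1 * l2 * S)"
    using l1 l2 S by (simp add: field_simps power2_eq_square)
  finally have "- ((z - y)\<^sup>2 / l2) - y\<^sup>2 / l1 = - (z\<^sup>2 / l2) * (1 - l1 / S) - S / (l1 * l2) * (y - z * l1 / S)\<^sup>2"
    using l1 l2 S by simp
  then show ?thesis
    unfolding m unfolding k S_def .
qed

lemma normal_density_half_variance:
  fixes l x :: real
  assumes "l > 0"
  shows "normal_density 0 (sqrt l * sqrt (1 / 2)) x = exp (- (x\<^sup>2 / l)) / sqrt (pi * l)"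
proof -
  have "(sqrt l * sqrt (1 / 2))\<^sup>2 = l / 2"
    using assms by (simp add: power_mult_distrib)
  then show ?thesis
    unfolding normal_density_def by (simp add: field_simps)
qed

lemma chi_density_nonneg: "chi_density k x \<ge> 0"
proof -
  have "Gamma (real k / 2) \<ge> 0"
    by (cases "k = 0") (auto intro: less_imp_le Gamma_real_pos)
  then show ?thesis
    unfolding chi_density_def by (auto intro!: divide_nonneg_nonneg mult_nonneg_nonneg)
qed

lemma chi_density_scaled:
  fixes l y :: real and M :: nat
  assumes l: "l > 0" and M: "M \<ge> 1"
  shows "chi_density (2 * M) (y / sqrt (l / 2)) / sqrt (l / 2)
       = (if y > 0 then 2 * y ^ (2 * M - 1) * exp (- (y\<^sup>2 / l)) / (l ^ M * Gamma (real M)) else 0)"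
proof (cases "y > 0")
  case True
  define c where "c = sqrt (l / 2)"
  have c: "c > 0" "c\<^sup>2 = l / 2"
    using l by (simp_all add: c_def)
  have "c ^ (2 * M - 1) * c = c ^ (2 * M)"
    using M by (simp add: power_Suc2[symmetric])
  also have "\<dots> = (l / 2) ^ M"
    by (simp add: power_mult c)
  finally have cM: "c ^ (2 * M - 1) * c = (l / 2) ^ M" .
  have p2: "(2::real) powr (real (2 * M) / 2 - 1) = 2 ^ M / 2"
    by (simp add: powr_diff powr_realpow)
  have "(y / c)\<^sup>2 / 2 = y\<^sup>2 / l"
    using c l by (simp add: power_divide field_simps)
  then have "chi_density (2 * M) (y / c) / c
      = 2 * y ^ (2 * M - 1) * exp (- (y\<^sup>2 / l)) / ((c ^ (2 * M - 1) * c * 2 ^ M) * Gamma (real M))"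
    unfolding chi_density_def p2 using True c by (simp add: power_divide field_simps)
  also have "\<dots> = 2 * y ^ (2 * M - 1) * exp (- (y\<^sup>2 / l)) / (l ^ M * Gamma (real M))"
    unfolding cM by (simp add: power_divide)
  finally show ?thesis
    using True by (simp add: c_def)
next
  case False
  then have "\<not> y / sqrt (l / 2) > 0"
    using l by (auto simp: zero_less_divide_iff)
  then show ?thesis
    using False by (simp add: chi_density_def)
qed

lemma normal_chi_product_eq:
  fixes z y l1 l2 :: real and M :: nat
  assumes l1: "l1 > 0" and l2: "l2 > 0" and M: "M \<ge> 1"
  defines "k \<equiv> 1 / l1 + 1 / l2"
  shows "normal_density 0 (sqrt l2 * sqrt (1 / 2)) (z - y) * (chi_density (2 * M) (y / sqrt (l1 / 2)) / sqrt (l1 / 2))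
       = 2 * (exp (- (z\<^sup>2 / l2) * (1 - l1 / (l1 + l2))) / (Gamma (real M) * l1 ^ M * sqrt (pi * l2)))
         * (indicator {0<..} y * (y ^ (2 * M - 1) * exp (- k * (y - z / (l2 * k))\<^sup>2)))"
proof (cases "y > 0")
  case True
  have "exp (- ((z - y)\<^sup>2 / l2)) * exp (- (y\<^sup>2 / l1))
      = exp (- (z\<^sup>2 / l2) * (1 - l1 / (l1 + l2))) * exp (- k * (y - z / (l2 * k))\<^sup>2)"
  proof -
    have "exp (- ((z - y)\<^sup>2 / l2)) * exp (- (y\<^sup>2 / l1)) = exp (- ((z - y)\<^sup>2 / l2) - y\<^sup>2 / l1)"
      by (simp add: exp_add[symmetric])
    also have "\<dots> = exp (- (z\<^sup>2 / l2) * (1 - l1 / (l1 + l2)) - k * (y - z / (l2 * k))\<^sup>2)"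
      unfolding exponent_complete_square[OF l1 l2] k_def ..
    finally show ?thesis
      by (simp add: exp_add[symmetric])
  qed
  then show ?thesis
    unfolding normal_density_half_variance[OF l2] chi_density_scaled[OF l1 M]
    using True by (simp add: field_simps)
qed (simp add: chi_density_scaled[OF l1 M])

lemma completed_square_center_scaled:
  fixes z l1 l2 :: real
  assumes l1: "l1 > 0" and l2: "l2 > 0"
  defines "k \<equiv> 1 / l1 + 1 / l2"
  shows "z / (l2 * k) * sqrt k \<ge> 0 \<longleftrightarrow> z \<ge> 0"
    and "(z / (l2 * k) * sqrt k)\<^sup>2 = z\<^sup>2 / l2 * (l1 / (l1 + l2))"
proof -
  have k: "k > 0"
    unfolding k_def using l1 l2 by (intro add_pos_pos) auto
  then have "sqrt k / (l2 * k) > 0"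
    using l2 by simp
  moreover have "z / (l2 * k) * sqrt k = z * (sqrt k / (l2 * k))"
    by simp
  ultimately show "z / (l2 * k) * sqrt k \<ge> 0 \<longleftrightarrow> z \<ge> 0"
    by (simp only:) (simp add: zero_le_mult_iff del: times_divide_eq_right)
  have lk: "l2 * k = (l1 + l2) / l1"
    unfolding k_def using l1 l2 by (simp add: field_simps)
  have "(z / (l2 * k) * sqrt k)\<^sup>2 = z\<^sup>2 / (l2 * k)\<^sup>2 * k"
    using k by (simp add: power_mult_distrib power_divide)
  also have "\<dots> = z\<^sup>2 / (l2 * (l2 * k))"
    using k l2 by (simp add: power2_eq_square field_simps)
  also have "\<dots> = z\<^sup>2 / l2 * (l1 / (l1 + l2))"
    unfolding lk using l1 l2 by (simp add: field_simps)
  finally show "(z / (l2 * k) * sqrt k)\<^sup>2 = z\<^sup>2 / l2 * (l1 / (l1 + l2))" .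
qed

lemma
  fixes z l1 l2 :: real and M :: nat
  assumes l1: "l1 > 0" and l2: "l2 > 0" and M: "M \<ge> 1"
  defines "G \<equiv> \<lambda>y. normal_density 0 (sqrt l2 * sqrt (1 / 2)) (z - y)
                   * (chi_density (2 * M) (y / sqrt (l1 / 2)) / sqrt (l1 / 2))"
  shows integrable_normal_chi_product: "integrable lborel G"
    and integral_normal_chi_product: "(\<integral>y. G y \<partial>lborel) = f1 M l1 l2 z"
proof -
  define k where "k = 1 / l1 + 1 / l2"
  define m where "m = z / (l2 * k)"
  define N where "N = 2 * M - 1"
  define P where "P = exp (- (z\<^sup>2 / l2) * (1 - l1 / (l1 + l2))) / (Gamma (real M) * l1 ^ M * sqrt (pi * l2))"
  define X where "X n = Gamma ((real n + 1) / 2)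
                        + c_sign n z * lower_inc_gamma ((real n + 1) / 2) (z\<^sup>2 / l2 * (l1 / (l1 + l2)))"
    for n :: nat
  have k: "k > 0"
    unfolding k_def using l1 l2 by (intro add_pos_pos) auto
  have G_eq: "G = (\<lambda>y. (2 * P) * (indicator {0<..} y * (y ^ N * exp (- k * (y - m)\<^sup>2))))"
    unfolding G_def P_def N_def m_def k_def normal_chi_product_eq[OF l1 l2 M] ..
  show "integrable lborel G"
    unfolding G_eq by (intro integrable_mult_right integrable_power_shifted_gauss[OF k])
  have center: "m * sqrt k \<ge> 0 \<longleftrightarrow> z \<ge> 0" "(m * sqrt k)\<^sup>2 = z\<^sup>2 / l2 * (l1 / (l1 + l2))"
    unfolding m_def k_def by (rule completed_square_center_scaled[OF l1 l2])+
  have "c_sign n (m * sqrt k) = c_sign n z" for n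
    unfolding c_sign_def center(1) ..
  then have moment: "(\<integral>t. indicator {-m<..} t * (t ^ n * exp (- k * t\<^sup>2)) \<partial>lborel)
      = (1 / sqrt k) ^ (n + 1) * (X n / 2)" for n
    unfolding integral_power_gauss_scale[OF k] integral_power_gauss_greaterThan center(2) X_def
    by (simp only:)
  have "(\<integral>y. G y \<partial>lborel) = (2 * P) * (\<integral>y. indicator {0<..} y * (y ^ N * exp (- k * (y - m)\<^sup>2)) \<partial>lborel)"
    unfolding G_eq by (rule integral_mult_right_zero)
  also have "\<dots> = P * (\<Sum>n\<le>N. real (N choose n) * (m ^ (N - n) * (1 / sqrt k) ^ (n + 1) * X n))"
    unfolding integral_power_shifted_gauss[OF k] moment by (simp add: sum_distrib_left ac_simps)
  also have "\<dots> = P * (\<Sum>n\<le>N. real (N choose n)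
                 * (X n / ((z / l2) powi (int n + 1 - 2 * int M) * k powr (2 * real M - (real n + 1) / 2))))"
  proof -
    have "m ^ (N - n) * (1 / sqrt k) ^ (n + 1) * X n
        = X n / ((z / l2) powi (int n + 1 - 2 * int M) * k powr (2 * real M - (real n + 1) / 2))"
      if "n \<in> {..N}" for n
      unfolding m_def k_def N_def using that by (intro f1_summand_eq[OF _ M l1 l2]) (simp add: N_def)
    then show ?thesis
      by simp
  qed
  also have "\<dots> = f1 M l1 l2 z"
    unfolding f1_def P_def X_def N_def k_def atLeast0AtMost ..
  finally show "(\<integral>y. G y \<partial>lborel) = f1 M l1 l2 z" .
qed

lemma nn_integral_normal_chi_product:
  fixes z l1 l2 :: real and M :: nat
  assumes l1: "l1 > 0" and l2: "l2 > 0" and M: "M \<ge> 1"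
  shows "(\<integral>\<^sup>+y. ennreal (normal_density 0 (sqrt l2 * sqrt (1 / 2)) (z - y))
               * ennreal (chi_density (2 * M) (y / sqrt (l1 / 2)) / sqrt (l1 / 2)) \<partial>lborel)
       = ennreal (f1 M l1 l2 z)"
proof -
  have "(\<integral>\<^sup>+y. ennreal (normal_density 0 (sqrt l2 * sqrt (1 / 2)) (z - y))
               * ennreal (chi_density (2 * M) (y / sqrt (l1 / 2)) / sqrt (l1 / 2)) \<partial>lborel)
      = (\<integral>\<^sup>+y. ennreal (normal_density 0 (sqrt l2 * sqrt (1 / 2)) (z - y)
               * (chi_density (2 * M) (y / sqrt (l1 / 2)) / sqrt (l1 / 2))) \<partial>lborel)"
    using l1 by (intro nn_integral_cong, subst ennreal_mult'') (auto intro!: divide_nonneg_pos chi_density_nonneg)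
  also have "\<dots> = ennreal (f1 M l1 l2 z)"
    using integrable_normal_chi_product[OF l1 l2 M] integral_normal_chi_product[OF l1 l2 M] l1
    by (subst nn_integral_eq_integral) (auto intro!: mult_nonneg_nonneg divide_nonneg_pos chi_density_nonneg)
  finally show ?thesis .
qed

lemma (in prob_space) distributed_sum_pair:
  fixes V :: "nat \<Rightarrow> 'a \<Rightarrow> real"
  assumes ind: "indep_vars (\<lambda>_. borel) V {0, 1, 2}"
    and D0: "distributed M lborel (V 0) g0"
    and D1: "distributed M lborel (V 1) g1"
    and D2: "distributed M lborel (V 2) g2"
  shows "distributed M (lborel \<Otimes>\<^sub>M lborel) (\<lambda>\<omega>. (V 1 \<omega> + V 0 \<omega>, V 2 \<omega>))
           (\<lambda>(x, y). (\<integral>\<^sup>+u. g1 (x - u) * g0 u \<partial>lborel) * g2 y)"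
proof -
  have "indep_var borel ((\<lambda>f. f 1) \<circ> (\<lambda>\<omega>. restrict (\<lambda>i. V i \<omega>) {1}))
                  borel ((\<lambda>f. f 0) \<circ> (\<lambda>\<omega>. restrict (\<lambda>i. V i \<omega>) {0}))"
    by (intro indep_var_compose[OF indep_var_restrict[OF ind]]) auto
  then have "indep_var borel (V 1) borel (V 0)"
    by (simp add: comp_def)
  then have sum: "distributed M lborel (\<lambda>\<omega>. V 1 \<omega> + V 0 \<omega>) (\<lambda>x. \<integral>\<^sup>+u. g1 (x - u) * g0 u \<partial>lborel)"
    using D1 D0 by (rule distributed_convolution)
  have "indep_var borel ((\<lambda>f. f 1 + f 0) \<circ> (\<lambda>\<omega>. restrict (\<lambda>i. V i \<omega>) {0, 1}))
                  borel ((\<lambda>f. f 2) \<circ> (\<lambda>\<omega>. restrict (\<lambda>i. V i \<omega>) {2}))"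
    by (intro indep_var_compose[OF indep_var_restrict[OF ind]]) auto
  then have "indep_var lborel (\<lambda>\<omega>. V 1 \<omega> + V 0 \<omega>) lborel (V 2)"
    unfolding indep_var_eq by (simp add: comp_def)
  with sum D2 show ?thesis
    by (intro distributed_joint_indep sigma_finite_lborel)
qed

lemma (in prob_space) distributed_chi_plus_complex_normal:
  fixes X W1 W2 :: "'a \<Rightarrow> real" and K :: nat and l1 l2 :: real
  assumes K: "K \<ge> 1" and l1: "l1 > 0" and l2: "l2 > 0"
    and DX: "distributed M lborel X (\<lambda>x. ennreal (chi_density (2 * K) x))"
    and DW1: "distributed M lborel W1 (\<lambda>x. ennreal (normal_density 0 (sqrt (1/2)) x))"
    and DW2: "distributed M lborel W2 (\<lambda>x. ennreal (normal_density 0 (sqrt (1/2)) x))"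
    and ind: "indep_vars (\<lambda>_. borel) (\<lambda>i. if i = (0::nat) then X else if i = 1 then W1 else W2) {0, 1, 2}"
  shows "distributed M (lborel \<Otimes>\<^sub>M lborel) (\<lambda>\<omega>. (sqrt l2 * W1 \<omega> + sqrt (l1 / 2) * X \<omega>, sqrt l2 * W2 \<omega>))
           (\<lambda>(a, b). ennreal (f1 K l1 l2 a * f2 l2 b))"
proof -
  have c: "sqrt (l1 / 2) > 0" and d: "sqrt l2 > 0"
    using l1 l2 by simp_all
  have f2_normal: "f2 l2 y = normal_density 0 (sqrt l2 * sqrt (1/2)) y" for y
    unfolding f2_def normal_density_half_variance[OF l2] by simp
  define V where "V i = (\<lambda>x. (if i = 0 then sqrt (l1 / 2) else sqrt l2) * x)
                         \<circ> (if i = (0::nat) then X else if i = 1 then W1 else W2)" for i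
  have "indep_vars (\<lambda>_. borel) V {0, 1, 2}"
    unfolding V_def by (rule indep_vars_compose[OF ind]) simp
  moreover have "distributed M lborel (V 0) (\<lambda>y. ennreal (chi_density (2 * K) (y / sqrt (l1 / 2)) / sqrt (l1 / 2)))"
    using distributed_affine[OF DX, of "sqrt (l1 / 2)" 0] c
    by (simp add: V_def comp_def divide_ennreal chi_density_nonneg)
  moreover have "distributed M lborel (V 1) (\<lambda>y. ennreal (normal_density 0 (sqrt l2 * sqrt (1/2)) y))"
    and "distributed M lborel (V 2) (\<lambda>y. ennreal (normal_density 0 (sqrt l2 * sqrt (1/2)) y))"
    using normal_density_affine[OF DW1, of "sqrt l2" 0] normal_density_affine[OF DW2, of "sqrt l2" 0] d
    by (simp_all add: V_def comp_def)
  ultimately have "distributed M (lborel \<Otimes>\<^sub>M lborel) (\<lambda>\<omega>. (V 1 \<omega> + V 0 \<omega>, V 2 \<omega>))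
      (\<lambda>(x, y). (\<integral>\<^sup>+u. ennreal (normal_density 0 (sqrt l2 * sqrt (1/2)) (x - u))
                          * ennreal (chi_density (2 * K) (u / sqrt (l1 / 2)) / sqrt (l1 / 2)) \<partial>lborel)
                 * ennreal (normal_density 0 (sqrt l2 * sqrt (1/2)) y))"
    by (rule distributed_sum_pair)
  then have "distributed M (lborel \<Otimes>\<^sub>M lborel) (\<lambda>\<omega>. (sqrt l2 * W1 \<omega> + sqrt (l1 / 2) * X \<omega>, sqrt l2 * W2 \<omega>))
      (\<lambda>(x, y). ennreal (f1 K l1 l2 x) * ennreal (normal_density 0 (sqrt l2 * sqrt (1/2)) y))"
    unfolding nn_integral_normal_chi_product[OF l1 l2 K] by (simp add: V_def comp_def)
  moreover have "(\<lambda>(a, b). ennreal (f1 K l1 l2 a * f2 l2 b))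
      = (\<lambda>(x, y). ennreal (f1 K l1 l2 x) * ennreal (normal_density 0 (sqrt l2 * sqrt (1/2)) y))"
    using f2_normal by (simp add: fun_eq_iff ennreal_mult'' normal_density_nonneg)
  ultimately show ?thesis
    by simp
qed

lemma
  fixes rho beta q sigma2 Ups alpha :: real and tp :: nat
  assumes "tp \<ge> 1" "rho > 0" "beta > 0" "q > 0" "sigma2 > 0" "Ups \<ge> 0"
    and alpha: "alpha \<ge> rho * beta * real tp"
  shows lam1_pos: "lam1 rho q beta (real tp) sigma2 alpha > 0"
    and lam2_pos: "lam2 rho q beta (real tp) sigma2 Ups alpha > 0"
proof -
  have tp: "real tp > 0"
    using assms by simp
  have den: "alpha + sigma2 > rho * beta * real tp" "rho * beta * real tp > 0"
    using assms tp by simp_all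
  have num: "rho * q * beta\<^sup>2 * (real tp)\<^sup>2 > 0"
    using assms tp by simp
  from den num show "lam1 rho q beta (real tp) sigma2 alpha > 0"
    unfolding lam1_def by simp
  \<comment> \<open>\<open>\<alpha> + \<sigma>\<^sup>2 > \<rho> \<beta> \<tau>\<^sub>p\<close> gives \<open>\<lambda>\<^sub>1 < q \<beta> \<tau>\<^sub>p\<close>, hence \<open>\<lambda>\<^sub>2 > 0\<close>\<close>
  have "lam1 rho q beta (real tp) sigma2 alpha < rho * q * beta\<^sup>2 * (real tp)\<^sup>2 / (rho * beta * real tp)"
    unfolding lam1_def using den num by (intro divide_strict_left_mono) auto
  also have "\<dots> = q * beta * real tp"
    using assms tp by (simp add: power2_eq_square field_simps)
  finally show "lam2 rho q beta (real tp) sigma2 Ups alpha > 0"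
    unfolding lam2_def using assms by simp
qed

theorem theorem1:
  fixes P :: "'a measure" and X W1 W2 :: "'a \<Rightarrow> real"
    and M tp :: nat and rho beta q sigma2 Ups :: real
  assumes "prob_space P"
    and "M \<ge> 1" and "tp \<ge> 1"
    and "rho > 0" and "beta > 0" and "q > 0" and "sigma2 > 0" and "Ups \<ge> 0"
    and "distributed P lborel X (\<lambda>x. ennreal (chi_density (2 * M) x))"
    and "distributed P lborel W1 (\<lambda>x. ennreal (normal_density 0 (sqrt (1/2)) x))"
    and "distributed P lborel W2 (\<lambda>x. ennreal (normal_density 0 (sqrt (1/2)) x))"
    and "prob_space.indep_vars P (\<lambda>_. borel)
           (\<lambda>i. if i = (0::nat) then X else if i = 1 then W1 else W2) {0, 1, 2}"
  shows "\<forall>alpha \<ge> rho * beta * real tp.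
    (let l1 = lam1 rho q beta (real tp) sigma2 alpha;
         l2 = lam2 rho q beta (real tp) sigma2 Ups alpha;
         z = (\<lambda>\<omega>. complex_of_real (sqrt (l1 / 2) * X \<omega>)
                   + complex_of_real (sqrt l2) * Complex (W1 \<omega>) (W2 \<omega>))
     in distributed P (lborel \<Otimes>\<^sub>M lborel) (\<lambda>\<omega>. (Re (z \<omega>), Im (z \<omega>)))
          (\<lambda>(a, b). ennreal (f1 M l1 l2 a * f2 l2 b)))"
proof (intro allI impI)
  interpret prob_space P by fact
  fix alpha assume alpha: "alpha \<ge> rho * beta * real tp"
  define l1 where "l1 = lam1 rho q beta (real tp) sigma2 alpha"
  define l2 where "l2 = lam2 rho q beta (real tp) sigma2 Ups alpha"
  have "l1 > 0" "l2 > 0"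
    unfolding l1_def l2_def by (rule lam1_pos[OF assms(3-8) alpha] lam2_pos[OF assms(3-8) alpha])+
  then have "distributed P (lborel \<Otimes>\<^sub>M lborel) (\<lambda>\<omega>. (sqrt l2 * W1 \<omega> + sqrt (l1 / 2) * X \<omega>, sqrt l2 * W2 \<omega>))
      (\<lambda>(a, b). ennreal (f1 M l1 l2 a * f2 l2 b))"
    using assms(2,9-12) by (intro distributed_chi_plus_complex_normal)
  then show "let l1 = lam1 rho q beta (real tp) sigma2 alpha;
         l2 = lam2 rho q beta (real tp) sigma2 Ups alpha;
         z = (\<lambda>\<omega>. complex_of_real (sqrt (l1 / 2) * X \<omega>)
                   + complex_of_real (sqrt l2) * Complex (W1 \<omega>) (W2 \<omega>))
     in distributed P (lborel \<Otimes>\<^sub>M lborel) (\<lambda>\<omega>. (Re (z \<omega>), Im (z \<omega>)))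
          (\<lambda>(a, b). ennreal (f1 M l1 l2 a * f2 l2 b))"
    unfolding Let_def l1_def[symmetric] l2_def[symmetric] by (simp add: ac_simps)
qed

end
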